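(* Let $X$ be a $d$-uniform simplicial complex and $k\le d$. Assume there exist functions $up(t,\nu)$ and $low(t,\nu)$ such that for every $\nu>0$ every $\nu$-Lipschitz $f:X(d)\to\mathbb{R}$ satisfies $\Pr[f-\mathbb{E}[f]>t]\le up(t,\nu)$ and $\Pr[f-\mathbb{E}[f]<-t]\le low(t,\nu)$ for all $t>0$. Then every function $f':X(k)\to\mathbb{R}$ with $\nu$-bounded difference satisfies, for all $t>0$, \[\Pr[f'-\mathbb{E}[f']>t]\le up\left(\tfrac t2,\tfrac kd\nu\right)+e^{-\frac{t^2}{4\nu}},\qquad\Pr[f'-\mathbb{E}[f']<-t]\le low\left(\tfrac t2,\tfrac kd\nu\right)+e^{-\frac{t^2}{4\nu}}.\]
   Context: $X$ is a $d$-uniform simplicial complex ($X(j)$ its faces of size $j$) with a distribution $\pi_d$ on $X(d)$ inducing $\pi_j$ on $X(j)$ by uniform subsampling; probabilities on $X(j)$ are with respect to $\pi_j$. Lipschitz: order vertices of each face arbitrarily; for $x=(x_1,\dots,x_m)\sim\pi_m$ let $Z=f(x)$ and $Z'_{(i)}=f(x_1,\dots,z_i,\dots,x_m)$ with $z_i$ drawn from the vertex distribution of the link of $x\setminus\{x_i\}$ (the link of $s$ being $\{t\setminus s:s\subseteq t\in X\}$ with induced distribution); $f:X(m)\to\mathbb{R}$ is $\nu$-Lipschitz if with probability $1$, $\sum_{i=1}^m(Z-Z'_{(i)})_+^2\le\nu$ where $(z)_+=\max\{z,0\}$. The down-up walk on $X(m)$ moves from $s$ by deleting a uniform vertex and adding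 back a face containing the remainder proportionally to $\pi_m$; $f:X(m)\to\mathbb{R}$ has $\nu$-bounded difference if $(f(s)-f(s'))^2\le\frac{\nu}{m}$ for every $s\in X(m)$ and every neighbor $s'$ of $s$ in this walk. *)

theory Defs
  imports "HOL-Probability.Probability"
begin

text \<open>A d-uniform simplicial complex is given by a distribution pd on its top faces
  (sets of vertices); the complex is the downward closure of the support of pd.
  X(j) is the support of the induced distribution pi_j below.\<close>

definition d_uniform :: "'v set pmf \<Rightarrow> nat \<Rightarrow> bool" where
  "d_uniform pd d \<longleftrightarrow> (\<forall>t \<in> set_pmf pd. finite t \<and> card t = d)"

definition face_pmf :: "'v set pmf \<Rightarrow> nat \<Rightarrow> 'v set pmf" where
  "face_pmf pd j = bind_pmf pd (\<lambda>t. pmf_of_set {u. u \<subseteq> t \<and> card u = j})"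

definition link_vertex_pmf :: "'v set pmf \<Rightarrow> 'v set \<Rightarrow> 'v pmf" where
  "link_vertex_pmf pd s =
     map_pmf (\<lambda>t. the_elem (t - s)) (cond_pmf (face_pmf pd (Suc (card s))) {t. s \<subseteq> t})"

text \<open>nu-Lipschitz (the "with probability 1" condition over x ~ pi_m and the independent
  resamplings z_i from the links of x - {x_i}).\<close>
definition lipschitz_cx :: "'v set pmf \<Rightarrow> nat \<Rightarrow> real \<Rightarrow> ('v set \<Rightarrow> real) \<Rightarrow> bool" where
  "lipschitz_cx pd m \<nu> f \<longleftrightarrow>
     (\<forall>x \<in> set_pmf (face_pmf pd m). \<forall>z :: 'v \<Rightarrow> 'v.
        (\<forall>v \<in> x. z v \<in> set_pmf (link_vertex_pmf pd (x - {v}))) \<longrightarrow>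
        (\<Sum>v\<in>x. (max (f x - f (insert (z v) (x - {v}))) 0)\<^sup>2) \<le> \<nu>)"

definition down_up_step :: "'v set pmf \<Rightarrow> nat \<Rightarrow> 'v set \<Rightarrow> 'v set pmf" where
  "down_up_step pd m s =
     bind_pmf (pmf_of_set s) (\<lambda>v. cond_pmf (face_pmf pd m) {t. s - {v} \<subseteq> t})"

definition bounded_difference :: "'v set pmf \<Rightarrow> nat \<Rightarrow> real \<Rightarrow> ('v set \<Rightarrow> real) \<Rightarrow> bool" where
  "bounded_difference pd m \<nu> f \<longleftrightarrow>
     (\<forall>s \<in> set_pmf (face_pmf pd m). \<forall>s' \<in> set_pmf (down_up_step pd m s).
        (f s - f s')\<^sup>2 \<le> \<nu> / real m)"

end

theory Submission
  imports Defs "HOL-Probability.Hoeffding"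
begin

(* Let F s be the average of f' over the k-subsets of a top face s. Sampling from pi_k means
  sampling s from pi_d and then a uniform k-subset T of s, so E f' = E F. Exchanging one vertex
  of s changes F by at most (k/d) sqrt(nu/k), because only the fraction k/d of the k-subsets
  contains the removed vertex; hence F is (k/d) nu-Lipschitz and the hypothesis bounds the
  probability that F deviates by t/2. Given s, the bounded difference property says that f'
  changes by at most sqrt(nu/k) when one element of T is exchanged. Revealing the elements of T
  one at a time gives a martingale with k increments of range sqrt(nu/k), and Hoeffding's lemma
  bounds the probability that f'(T) deviates from F(s) by t/2 by exp(-t^2/(2 nu)). *)

section \<open>Subsets of fixed size and averages\<close>

definition k_subsets :: "'a set \<Rightarrow> nat \<Rightarrow> 'a set set" where
  "k_subsets S k = {T. T \<subseteq> S \<and> card T = k}"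

definition avg :: "'b set \<Rightarrow> ('b \<Rightarrow> real) \<Rightarrow> real" where
  "avg A g = sum g A / real (card A)"

lemma mem_k_subsets [simp]: "T \<in> k_subsets S k \<longleftrightarrow> T \<subseteq> S \<and> card T = k"
  by (simp add: k_subsets_def)

lemma finite_k_subsets [simp]: "finite S \<Longrightarrow> finite (k_subsets S k)"
  unfolding k_subsets_def by (rule finite_subset[of _ "Pow S"]) auto

lemma card_k_subsets: "finite S \<Longrightarrow> card (k_subsets S k) = card S choose k"
  unfolding k_subsets_def by (rule n_subsets)

lemma k_subsets_nonempty: "finite S \<Longrightarrow> k \<le> card S \<Longrightarrow> k_subsets S k \<noteq> {}"
  using card_k_subsets[of S k] by (auto simp: zero_less_binomial_iff)

lemma card_k_subsets_containing:
  assumes S: "finite S" "v \<in> S" and k: "k \<ge> 1"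
  shows "card {T \<in> k_subsets S k. v \<in> T} = (card S - 1) choose (k - 1)"
proof -
  define A where "A = {T \<in> k_subsets S k. v \<in> T}"
  have "k_subsets S k = A \<union> k_subsets (S - {v}) k" "A \<inter> k_subsets (S - {v}) k = {}"
    by (auto simp: A_def)
  moreover have "finite A"
    using S by (simp add: A_def)
  ultimately have "card (k_subsets S k) = card A + card (k_subsets (S - {v}) k)"
    using S by (simp add: card_Un_disjoint)
  then have "card S choose k = card A + (card S - 1 choose k)"
    using S by (simp add: card_k_subsets card_Diff_singleton)
  moreover have "card S choose k = (card S - 1 choose (k - 1)) + (card S - 1 choose k)"
    using S k by (intro choose_reduce_nat) (auto simp: card_gt_0_iff)
  ultimately show ?thesis by (simp add: A_def)
qed

lemma avg_mono: "(\<And>x. x \<in> A \<Longrightarrow> f x \<le> g x) \<Longrightarrow> avg A f \<le> avg A g"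
  unfolding avg_def by (intro divide_right_mono sum_mono) auto

lemma avg_nonneg: "(\<And>x. x \<in> A \<Longrightarrow> 0 \<le> f x) \<Longrightarrow> 0 \<le> avg A f"
  unfolding avg_def by (intro divide_nonneg_nonneg sum_nonneg) auto

lemma avg_cmult: "avg A (\<lambda>x. c * f x) = c * avg A f"
  unfolding avg_def by (simp add: sum_distrib_left)

lemma avg_const: "finite A \<Longrightarrow> A \<noteq> {} \<Longrightarrow> avg A (\<lambda>x. c) = c"
  unfolding avg_def by simp

lemma avg_diff: "avg A (\<lambda>x. f x - g x) = avg A f - avg A g"
  unfolding avg_def by (simp add: sum_subtractf diff_divide_distrib)

lemma avg_uminus: "avg A (\<lambda>x. - f x) = - avg A f"
  unfolding avg_def by (simp add: sum_negf)

lemma abs_avg_le: "\<bar>avg A f\<bar> \<le> avg A (\<lambda>x. \<bar>f x\<bar>)"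
  unfolding avg_def by (auto intro!: divide_right_mono sum_abs simp: abs_divide)

lemma avg_indicator: "avg A (indicator X) = real (card (A \<inter> X)) / real (card A)"
  by (cases "finite A") (simp_all add: avg_def indicator_def sum.If_cases Int_def)

lemma expectation_pmf_of_set_avg:
  "finite A \<Longrightarrow> A \<noteq> {} \<Longrightarrow> measure_pmf.expectation (pmf_of_set A) f = avg A f"
  by (simp add: integral_pmf_of_set avg_def)

lemma sum_k_subsets_Suc:
  assumes S: "finite S"
  shows "(\<Sum>T\<in>k_subsets S (Suc k). g T) * real (Suc k) =
         (\<Sum>x\<in>S. \<Sum>T\<in>k_subsets (S - {x}) k. g (insert x T))"
proof -
  have by_first: "(\<Sum>T\<in>k_subsets (S - {x}) k. g (insert x T)) =
      (\<Sum>T\<in>{T \<in> k_subsets S (Suc k). x \<in> T}. g T)" if x: "x \<in> S" for x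
  proof (rule sum.reindex_bij_witness[where j = "insert x" and i = "\<lambda>T. T - {x}"])
    fix T assume "T \<in> {T \<in> k_subsets S (Suc k). x \<in> T}"
    with S show "T - {x} \<in> k_subsets (S - {x}) k"
      by (auto simp: finite_subset)
  qed (use x S in \<open>auto simp: card_insert_if finite_subset\<close>)
  have "(\<Sum>x\<in>S. \<Sum>T\<in>k_subsets (S - {x}) k. g (insert x T)) =
        (\<Sum>x\<in>S. \<Sum>T\<in>{T \<in> k_subsets S (Suc k). x \<in> T}. g T)"
    using by_first by simp
  also have "\<dots> = (\<Sum>T\<in>k_subsets S (Suc k). \<Sum>x\<in>{x \<in> S. x \<in> T}. g T)"
    by (rule sum.swap_restrict) (use S in auto)
  also have "\<dots> = (\<Sum>T\<in>k_subsets S (Suc k). g T * real (Suc k))"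
    by (intro sum.cong refl) (auto simp: Int_absorb1 Collect_conj_eq[symmetric] simp flip: Int_def)
  finally show ?thesis by (simp add: sum_distrib_right)
qed

lemma avg_k_subsets_Suc:
  assumes S: "finite S" and k: "Suc k \<le> card S"
  shows "avg (k_subsets S (Suc k)) g =
         avg S (\<lambda>x. avg (k_subsets (S - {x}) k) (\<lambda>T. g (insert x T)))"
proof -
  define n where "n = card S"
  have "avg S (\<lambda>x. avg (k_subsets (S - {x}) k) (\<lambda>T. g (insert x T))) =
     (\<Sum>x\<in>S. \<Sum>T\<in>k_subsets (S - {x}) k. g (insert x T)) / (real (n - 1 choose k) * real n)"
    using S unfolding avg_def n_def
    by (simp add: card_k_subsets card_Diff_singleton sum_divide_distrib)
  also have "\<dots> = (\<Sum>T\<in>k_subsets S (Suc k). g T) * real (Suc k)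
                    / (real (n choose Suc k) * real (Suc k))"
    using Suc_times_binomial_eq[of "n - 1" k] k
    by (simp only: sum_k_subsets_Suc[OF S, symmetric] n_def Suc_diff_1 flip: of_nat_mult)
       (simp add: mult.commute)
  also have "\<dots> = avg (k_subsets S (Suc k)) g"
    using S by (simp add: avg_def card_k_subsets n_def)
  finally show ?thesis by simp
qed

lemma card_insert_Diff_singleton:
  "finite T \<Longrightarrow> v \<in> T \<Longrightarrow> w \<notin> T \<Longrightarrow> card (insert w (T - {v})) = card T"
  using card_gt_0_iff[of T] by auto

definition exchange :: "'a \<Rightarrow> 'a \<Rightarrow> 'a set \<Rightarrow> 'a set" where
  "exchange v w T = (if v \<in> T then insert w (T - {v}) else T)"

lemma exchange_mem_k_subsets:
  assumes S: "finite S" "w \<notin> S" and T: "T \<in> k_subsets S k"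
  shows "exchange v w T \<in> k_subsets (insert w (S - {v})) k"
proof (cases "v \<in> T")
  case True
  have "finite T" "w \<notin> T" using S T finite_subset by auto
  with True have "card (insert w (T - {v})) = card T" by (intro card_insert_Diff_singleton)
  then show ?thesis using T True by (auto simp: exchange_def)
qed (use T in \<open>auto simp: exchange_def\<close>)

lemma bij_betw_exchange:
  assumes S: "finite S" "v \<in> S" "w \<notin> S"
  shows "bij_betw (exchange v w) (k_subsets S k) (k_subsets (insert w (S - {v})) k)"
proof (rule bij_betw_byWitness[where f' = "exchange w v"])
  have S_eq: "insert v (insert w (S - {v}) - {w}) = S" using S by auto
  show "\<forall>T\<in>k_subsets S k. exchange w v (exchange v w T) = T"
    "\<forall>U\<in>k_subsets (insert w (S - {v})) k. exchange v w (exchange w v U) = U"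
    using S by (auto simp: exchange_def)
  show "exchange v w ` k_subsets S k \<subseteq> k_subsets (insert w (S - {v})) k"
    using S by (auto intro: exchange_mem_k_subsets)
  show "exchange w v ` k_subsets (insert w (S - {v})) k \<subseteq> k_subsets S k"
    using S exchange_mem_k_subsets[of "insert w (S - {v})" v _ k w] by (auto simp only: S_eq)
qed

lemma avg_k_subsets_exchange:
  assumes "finite S" "v \<in> S" "w \<notin> S"
  shows "avg (k_subsets (insert w (S - {v})) k) h = avg (k_subsets S k) (\<lambda>T. h (exchange v w T))"
  using bij_betw_exchange[OF assms, of k]
  by (simp add: avg_def sum.reindex_bij_betw bij_betw_same_card)

lemma avg_k_subsets_exchange_diff_le:
  assumes S: "finite S" "v \<in> S" "w \<notin> S" and k: "1 \<le> k" "k \<le> card S" and c: "c \<ge> 0"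
    and f: "\<And>T. T \<in> k_subsets S k \<Longrightarrow> v \<in> T \<Longrightarrow> \<bar>f T - f (insert w (T - {v}))\<bar> \<le> c"
  shows "\<bar>avg (k_subsets S k) f - avg (k_subsets (insert w (S - {v})) k) f\<bar>
           \<le> real k / real (card S) * c"
proof -
  define A where "A = k_subsets S k"
  define n where "n = card S"
  have "\<bar>avg A f - avg (k_subsets (insert w (S - {v})) k) f\<bar>
      = \<bar>avg A (\<lambda>T. f T - f (exchange v w T))\<bar>"
    using S by (simp add: A_def avg_k_subsets_exchange avg_diff)
  also have "\<dots> \<le> avg A (\<lambda>T. c * indicator {T. v \<in> T} T)"
    using f c by (intro order_trans[OF abs_avg_le avg_mono]) (auto simp: A_def exchange_def)
  also have "\<dots> = c * (real (n - 1 choose (k - 1)) / real (n choose k))"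
  proof -
    have "A \<inter> {T. v \<in> T} = {T \<in> k_subsets S k. v \<in> T}" by (auto simp: A_def)
    then show ?thesis
      using S k by (simp only: avg_cmult avg_indicator card_k_subsets_containing)
                   (simp add: A_def n_def card_k_subsets)
  qed
  also have "real (n - 1 choose (k - 1)) / real (n choose k) = real k / real n"
    using times_binomial_minus1_eq[of k n] k
    by (simp add: n_def field_simps flip: of_nat_mult)
  finally show ?thesis by (simp add: A_def n_def mult.commute)
qed

section \<open>Concentration on a slice\<close>

definition swap_bounded :: "('a set \<Rightarrow> real) \<Rightarrow> 'a set \<Rightarrow> nat \<Rightarrow> real \<Rightarrow> bool" where
  "swap_bounded g S k c \<longleftrightarrow>
     (\<forall>T\<in>k_subsets S k. \<forall>v\<in>T. \<forall>w\<in>S - T. \<bar>g T - g (insert w (T - {v}))\<bar> \<le> c)"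

lemma swap_bounded_uminus [simp]: "swap_bounded (\<lambda>T. - g T) S k c = swap_bounded g S k c"
  unfolding swap_bounded_def by (simp add: abs_minus_commute)

lemma swap_bounded_insert:
  assumes g: "swap_bounded g S (Suc k) c" and S: "finite S" "x \<in> S"
  shows "swap_bounded (\<lambda>T. g (insert x T)) (S - {x}) k c"
  unfolding swap_bounded_def
proof (intro ballI)
  fix T v w assume T: "T \<in> k_subsets (S - {x}) k" and v: "v \<in> T" and w: "w \<in> S - {x} - T"
  have "finite T" using T S finite_subset by auto
  then have "insert x T \<in> k_subsets S (Suc k)" using T S by (auto simp: card_insert_if)
  moreover have "v \<in> insert x T" "w \<in> S - insert x T" using v w by auto
  ultimately have "\<bar>g (insert x T) - g (insert w (insert x T - {v}))\<bar> \<le> c"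
    using g unfolding swap_bounded_def by blast
  moreover have "insert w (insert x T - {v}) = insert x (insert w (T - {v}))"
    using v T by auto
  ultimately show "\<bar>g (insert x T) - g (insert x (insert w (T - {v})))\<bar> \<le> c" by simp
qed

lemma avg_insert_diff_le:
  assumes S: "finite S" "x \<in> S" "y \<in> S" and k: "Suc k \<le> card S"
    and g: "swap_bounded g S (Suc k) c" and c: "0 \<le> c"
  shows "avg (k_subsets (S - {x}) k) (\<lambda>T. g (insert x T))
           - avg (k_subsets (S - {y}) k) (\<lambda>T. g (insert y T)) \<le> c"
proof (cases "x = y")
  case False
  define A where "A = k_subsets (S - {x}) k"
  have "S - {y} = insert x (S - {x} - {y})" using S False by auto
  then have "avg (k_subsets (S - {y}) k) (\<lambda>T. g (insert y T)) =
      avg A (\<lambda>T. g (insert y (exchange y x T)))"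
    using S False by (simp add: A_def avg_k_subsets_exchange)
  moreover have "g (insert x T) - g (insert y (exchange y x T)) \<le> c" if T: "T \<in> A" for T
  proof (cases "y \<in> T")
    case False
    have "finite T" using T S finite_subset by (auto simp: A_def)
    then have "insert x T \<in> k_subsets S (Suc k)" "y \<in> S - insert x T"
      using T S False \<open>x \<noteq> y\<close> by (auto simp: A_def card_insert_if)
    then have "\<bar>g (insert x T) - g (insert y (insert x T - {x}))\<bar> \<le> c"
      using g unfolding swap_bounded_def by blast
    moreover have "insert x T - {x} = T" using T by (auto simp: A_def)
    ultimately show ?thesis using False by (simp add: exchange_def)
  qed (use c in \<open>auto simp: exchange_def insert_commute insert_absorb\<close>)
  then have "avg A (\<lambda>T. g (insert x T) - g (insert y (exchange y x T))) \<le> avg A (\<lambda>T. c)"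
    by (rule avg_mono)
  moreover have "finite A" "A \<noteq> {}"
    using S k by (auto simp: A_def k_subsets_nonempty card_Diff_singleton)
  ultimately show ?thesis by (simp add: A_def avg_diff avg_const)
qed (use c in simp)

lemma Hoeffdings_lemma_avg:
  assumes A: "finite A" "A \<noteq> {}" and h: "\<And>x y. x \<in> A \<Longrightarrow> y \<in> A \<Longrightarrow> h x - h y \<le> c"
    and l: "l > 0"
  shows "avg A (\<lambda>x. exp (l * (h x - avg A h))) \<le> exp (l\<^sup>2 * c\<^sup>2 / 8)"
proof -
  define a where "a = Min (h ` A)"
  have "a \<in> h ` A" using A unfolding a_def by (intro Min_in) auto
  then obtain y where y: "y \<in> A" "h y = a" by auto
  have range: "a \<le> h x \<and> h x \<le> a + c" if "x \<in> A" for x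
    using that A h[OF that y(1)] y by (auto simp: a_def)
  interpret interval_bounded_random_variable "pmf_of_set A" h a "a + c"
    by unfold_locales (use A range in \<open>auto simp: AE_measure_pmf_iff\<close>)
  have "measure_pmf.expectation (pmf_of_set A) h = avg A h"
    using A by (simp add: expectation_pmf_of_set_avg)
  then have "ennreal (avg A (\<lambda>x. exp (l * (h x - avg A h)))) =
      (\<integral>\<^sup>+x. exp (l * (h x - measure_pmf.expectation (pmf_of_set A) h)) \<partial>pmf_of_set A)"
    using A by (simp add: nn_integral_pmf_of_set avg_def ennreal_of_nat_eq_real_of_nat
                          divide_ennreal sum_nonneg card_gt_0_iff)
  also have "\<dots> \<le> ennreal (exp (l\<^sup>2 * (a + c - a)\<^sup>2 / 8))"
    using Hoeffdings_lemma_nn_integral[OF l] by simp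
  finally show ?thesis by (simp add: ennreal_le_iff)
qed

(* Reveal the elements of T one at a time: by avg_insert_diff_le the conditional means after the
  first element lie in an interval of length c, so Hoeffding's lemma bounds each of the k steps. *)
lemma avg_exp_deviation_le:
  assumes "finite S" "k \<le> card S" "swap_bounded g S k c" "0 < l" "0 \<le> c"
  shows "avg (k_subsets S k) (\<lambda>T. exp (l * (g T - avg (k_subsets S k) g)))
           \<le> exp (real k * l\<^sup>2 * c\<^sup>2 / 8)"
  using assms
proof (induction k arbitrary: S g)
  case 0
  then have "k_subsets S 0 = {{}}" by (auto simp: finite_subset)
  then show ?case by (simp add: avg_def)
next
  case (Suc k)
  note S = Suc.prems(1) and k = Suc.prems(2) and g = Suc.prems(3) and l = Suc.prems(4)
  define h where "h x = avg (k_subsets (S - {x}) k) (\<lambda>T. g (insert x T))" for x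
  define K where "K = exp (real k * l\<^sup>2 * c\<^sup>2 / 8)"
  have mean: "avg (k_subsets S (Suc k)) g = avg S h"
    unfolding h_def by (rule avg_k_subsets_Suc[OF S k])
  have "avg (k_subsets (S - {x}) k) (\<lambda>T. exp (l * (g (insert x T) - avg S h)))
          \<le> exp (l * (h x - avg S h)) * K" if x: "x \<in> S" for x
  proof -
    have "avg (k_subsets (S - {x}) k) (\<lambda>T. exp (l * (g (insert x T) - h x))) \<le> K"
      unfolding h_def K_def
      using Suc.IH swap_bounded_insert[OF g S x] S k x l Suc.prems(5) by simp
    then have "exp (l * (h x - avg S h)) *
        avg (k_subsets (S - {x}) k) (\<lambda>T. exp (l * (g (insert x T) - h x)))
          \<le> exp (l * (h x - avg S h)) * K"
      by (intro mult_left_mono) auto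
    moreover have "exp (l * (h x - avg S h)) * exp (l * (g (insert x T) - h x)) =
        exp (l * (g (insert x T) - avg S h))" for T
      by (simp add: mult_exp_exp algebra_simps)
    ultimately show ?thesis by (simp flip: avg_cmult)
  qed
  then have "avg (k_subsets S (Suc k)) (\<lambda>T. exp (l * (g T - avg S h)))
      \<le> K * avg S (\<lambda>x. exp (l * (h x - avg S h)))"
    by (simp add: avg_k_subsets_Suc[OF S k] avg_mono mult.commute flip: avg_cmult)
  also have "\<dots> \<le> K * exp (l\<^sup>2 * c\<^sup>2 / 8)"
    using S k avg_insert_diff_le[OF S _ _ k g Suc.prems(5)]
    by (intro mult_left_mono Hoeffdings_lemma_avg[OF S _ _ l]) (auto simp: h_def K_def)
  also have "\<dots> = exp (real (Suc k) * l\<^sup>2 * c\<^sup>2 / 8)"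
    by (simp add: K_def mult_exp_exp algebra_simps add_divide_distrib)
  finally show ?case by (simp add: mean)
qed

lemma prob_pmf_of_set_gt_le:
  assumes A: "finite A" "A \<noteq> {}" and l: "l \<ge> 0"
  shows "measure_pmf.prob (pmf_of_set A) {x. h x > a} \<le> exp (- (l * a)) * avg A (\<lambda>x. exp (l * h x))"
proof -
  have "measure_pmf.prob (pmf_of_set A) {x. h x > a} = avg A (indicator {x. h x > a})"
    using A by (simp add: measure_pmf_of_set avg_indicator)
  also have "\<dots> \<le> avg A (\<lambda>x. exp (l * (h x - a)))"
    using l by (intro avg_mono) (auto simp: indicator_def)
  also have "\<dots> = exp (- (l * a)) * avg A (\<lambda>x. exp (l * h x))"
    by (simp add: mult_exp_exp algebra_simps flip: avg_cmult)
  finally show ?thesis .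
qed

lemma prob_k_subsets_deviation_gt_le:
  assumes S: "finite S" and k: "1 \<le> k" "k \<le> card S" and g: "swap_bounded g S k c"
    and c: "c > 0" and a: "a > 0"
  shows "measure_pmf.prob (pmf_of_set (k_subsets S k)) {T. g T - avg (k_subsets S k) g > a}
           \<le> exp (- (2 * a\<^sup>2 / (real k * c\<^sup>2)))"
proof -
  define A where "A = k_subsets S k"
  define l where "l = 4 * a / (real k * c\<^sup>2)"
  have l: "l > 0" using a c k by (simp add: l_def)
  have A: "finite A" "A \<noteq> {}" using S k by (auto simp: A_def k_subsets_nonempty)
  have "measure_pmf.prob (pmf_of_set A) {T. g T - avg A g > a}
      \<le> exp (- (l * a)) * avg A (\<lambda>T. exp (l * (g T - avg A g)))"
    using A l by (intro prob_pmf_of_set_gt_le) auto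
  also have "\<dots> \<le> exp (- (l * a)) * exp (real k * l\<^sup>2 * c\<^sup>2 / 8)"
    using avg_exp_deviation_le[OF S k(2) g l] c by (simp add: A_def)
  also have "\<dots> = exp (- (2 * a\<^sup>2 / (real k * c\<^sup>2)))"
    using c k by (simp add: mult_exp_exp l_def field_simps power2_eq_square)
  finally show ?thesis by (simp add: A_def)
qed

lemma k_subsets_deviation_le:
  assumes S: "finite S" "k \<le> card S" and g: "swap_bounded g S k c" and c: "c \<ge> 0"
    and T: "T \<in> k_subsets S k"
  shows "\<bar>g T - avg (k_subsets S k) g\<bar> \<le> ln (real (card (k_subsets S k))) + real k * c\<^sup>2 / 8"
proof -
  define A where "A = k_subsets S k"
  have A: "finite A" "A \<noteq> {}" using S by (auto simp: A_def k_subsets_nonempty)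
  have one_sided: "h T - avg A h \<le> ln (real (card A)) + real k * c\<^sup>2 / 8"
    if h: "swap_bounded h S k c" for h
  proof -
    have "exp (h T - avg A h) \<le> (\<Sum>U\<in>A. exp (h U - avg A h))"
      using A T by (intro member_le_sum) (auto simp: A_def)
    also have "\<dots> = real (card A) * avg A (\<lambda>U. exp (1 * (h U - avg A h)))"
      using A by (simp add: avg_def)
    also have "\<dots> \<le> real (card A) * exp (real k * c\<^sup>2 / 8)"
      using avg_exp_deviation_le[OF S h zero_less_one c]
      by (intro mult_left_mono) (auto simp: A_def)
    finally have "h T - avg A h \<le> ln (real (card A) * exp (real k * c\<^sup>2 / 8))"
      by (metis exp_gt_zero exp_le_cancel_iff exp_ln order_less_le_trans)
    also have "\<dots> = ln (real (card A)) + real k * c\<^sup>2 / 8"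
      using A by (simp add: ln_mult card_gt_0_iff)
    finally show ?thesis .
  qed
  show ?thesis
    using one_sided[OF g] one_sided[of "\<lambda>T. - g T"] g by (simp add: avg_uminus A_def)
qed

section \<open>Mixtures of uniform distributions\<close>

lemma prob_bind_pmf_gt_le:
  fixes g :: "'b \<Rightarrow> real" and G :: "'a \<Rightarrow> real"
  assumes Q: "\<And>s. s \<in> set_pmf p \<Longrightarrow> measure_pmf.prob (Q s) {x. g x - G s > b} \<le> B"
    and B: "B \<ge> 0"
  shows "measure_pmf.prob (bind_pmf p Q) {x. g x - e > a + b}
           \<le> measure_pmf.prob p {s. G s - e > a} + B"
proof -
  define X where "X = {x. g x - e > a + b}"
  define Y where "Y = {s. G s - e > a}"
  have pointwise: "emeasure (Q s) X \<le> indicator Y s + ennreal B" if s: "s \<in> set_pmf p" for s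
  proof (cases "s \<in> Y")
    case True
    then show ?thesis by (simp add: measure_pmf.emeasure_le_1 add_increasing2)
  next
    case False
    then have "X \<subseteq> {x. g x - G s > b}" by (auto simp: X_def Y_def)
    then have "emeasure (Q s) X \<le> emeasure (Q s) {x. g x - G s > b}" by (rule emeasure_mono) simp
    also have "\<dots> \<le> ennreal B"
      using Q[OF s] by (simp add: measure_pmf.emeasure_eq_measure ennreal_leI)
    finally show ?thesis by (simp add: add_increasing)
  qed
  have "emeasure (bind_pmf p Q) X \<le> (\<integral>\<^sup>+s. (indicator Y s + ennreal B) \<partial>p)"
    using pointwise by (simp add: nn_integral_mono_AE AE_pmfI)
  also have "\<dots> = ennreal (measure_pmf.prob p Y + B)"
    using B by (simp add: nn_integral_add measure_pmf.emeasure_eq_measure ennreal_plus)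
  finally have "ennreal (measure_pmf.prob (bind_pmf p Q) X) \<le> ennreal (measure_pmf.prob p Y + B)"
    by (simp only: measure_pmf.emeasure_eq_measure)
  then show ?thesis
    unfolding X_def Y_def using B by (simp del: ennreal_plus)
qed

context
  fixes p :: "'a pmf" and A :: "'a \<Rightarrow> 'b set"
  assumes A: "\<And>s. s \<in> set_pmf p \<Longrightarrow> finite (A s) \<and> A s \<noteq> {}"
begin

lemma nn_integral_bind_pmf_of_set:
  fixes f :: "'b \<Rightarrow> real"
  assumes f: "\<And>x. f x \<ge> 0"
  shows "(\<integral>\<^sup>+x. f x \<partial>bind_pmf p (\<lambda>s. pmf_of_set (A s))) = (\<integral>\<^sup>+s. avg (A s) f \<partial>p)"
proof (simp, intro nn_integral_cong_AE AE_pmfI)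
  fix s assume s: "s \<in> set_pmf p"
  then show "(\<integral>\<^sup>+x. f x \<partial>pmf_of_set (A s)) = ennreal (avg (A s) f)"
    using A[OF s] f
    by (simp add: nn_integral_eq_integral integrable_measure_pmf_finite expectation_pmf_of_set_avg)
qed

lemma expectation_bind_pmf_of_set_nonneg:
  fixes f :: "'b \<Rightarrow> real"
  assumes f: "\<And>x. f x \<ge> 0"
  shows "measure_pmf.expectation (bind_pmf p (\<lambda>s. pmf_of_set (A s))) f =
         measure_pmf.expectation p (\<lambda>s. avg (A s) f)"
  using nn_integral_bind_pmf_of_set[OF f] f avg_nonneg[of _ f]
  by (simp add: integral_eq_nn_integral)

lemma integrable_avg_bind_pmf_of_set:
  fixes f :: "'b \<Rightarrow> real"
  assumes f: "integrable (bind_pmf p (\<lambda>s. pmf_of_set (A s))) f"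
  shows "integrable p (\<lambda>s. avg (A s) f)"
proof (rule Bochner_Integration.integrable_bound)
  have "(\<integral>\<^sup>+s. avg (A s) (\<lambda>x. \<bar>f x\<bar>) \<partial>p) < \<infinity>"
    using f nn_integral_bind_pmf_of_set[of "\<lambda>x. \<bar>f x\<bar>"]
    by (simp add: integrable_iff_bounded)
  then show "integrable p (\<lambda>s. avg (A s) (\<lambda>x. \<bar>f x\<bar>))"
    by (intro integrableI_nonneg) (auto intro!: AE_I2 avg_nonneg)
  show "AE s in p. norm (avg (A s) f) \<le> norm (avg (A s) (\<lambda>x. \<bar>f x\<bar>))"
    by (intro AE_I2) (simp add: order_trans[OF abs_avg_le])
qed simp

lemma expectation_bind_pmf_of_set:
  fixes f :: "'b \<Rightarrow> real"
  assumes f: "integrable (bind_pmf p (\<lambda>s. pmf_of_set (A s))) f"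
  shows "measure_pmf.expectation (bind_pmf p (\<lambda>s. pmf_of_set (A s))) f =
         measure_pmf.expectation p (\<lambda>s. avg (A s) f)"
proof -
  define M where "M = bind_pmf p (\<lambda>s. pmf_of_set (A s))"
  define f\<^sub>p where "f\<^sub>p x = max (f x) 0" for x
  define f\<^sub>n where "f\<^sub>n x = max (- f x) 0" for x
  have parts: "f = (\<lambda>x. f\<^sub>p x - f\<^sub>n x)" by (auto simp: f\<^sub>p_def f\<^sub>n_def)
  have int: "integrable M f\<^sub>p" "integrable M f\<^sub>n"
    using f unfolding M_def f\<^sub>p_def[abs_def] f\<^sub>n_def[abs_def] by auto
  have "measure_pmf.expectation M f = measure_pmf.expectation M f\<^sub>p - measure_pmf.expectation M f\<^sub>n"
    unfolding parts by (rule Bochner_Integration.integral_diff[OF int])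
  also have "\<dots> = measure_pmf.expectation p (\<lambda>s. avg (A s) f\<^sub>p)
                  - measure_pmf.expectation p (\<lambda>s. avg (A s) f\<^sub>n)"
    unfolding M_def by (simp add: expectation_bind_pmf_of_set_nonneg f\<^sub>p_def f\<^sub>n_def)
  also have "\<dots> = measure_pmf.expectation p (\<lambda>s. avg (A s) f\<^sub>p - avg (A s) f\<^sub>n)"
    using int unfolding M_def
    by (intro Bochner_Integration.integral_diff[symmetric] integrable_avg_bind_pmf_of_set)
  also have "\<dots> = measure_pmf.expectation p (\<lambda>s. avg (A s) f)"
    by (simp add: parts avg_diff)
  finally show ?thesis by (simp add: M_def)
qed

lemma integrable_bind_pmf_of_set:
  fixes f :: "'b \<Rightarrow> real"
  assumes f: "integrable p (\<lambda>s. avg (A s) f)"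
    and dev: "\<And>s x. s \<in> set_pmf p \<Longrightarrow> x \<in> A s \<Longrightarrow> \<bar>f x - avg (A s) f\<bar> \<le> K"
  shows "integrable (bind_pmf p (\<lambda>s. pmf_of_set (A s))) f"
proof (rule integrableI_bounded)
  have "avg (A s) (\<lambda>x. \<bar>f x\<bar>) \<le> \<bar>avg (A s) f\<bar> + \<bar>K\<bar>" if s: "s \<in> set_pmf p" for s
  proof -
    have "avg (A s) (\<lambda>x. \<bar>f x\<bar>) \<le> avg (A s) (\<lambda>x. \<bar>avg (A s) f\<bar> + \<bar>K\<bar>)"
      using dev[OF s] abs_triangle_ineq2 by (intro avg_mono) (smt (verit))
    then show ?thesis using A[OF s] by (simp add: avg_const)
  qed
  then have "(\<integral>\<^sup>+s. avg (A s) (\<lambda>x. \<bar>f x\<bar>) \<partial>p) \<le> (\<integral>\<^sup>+s. (\<bar>avg (A s) f\<bar> + \<bar>K\<bar>) \<partial>p)"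
    by (intro nn_integral_mono_AE AE_pmfI ennreal_leI) auto
  also have "\<dots> < \<infinity>"
    using f by (simp add: integrable_iff_bounded ennreal_plus nn_integral_add)
  finally show "(\<integral>\<^sup>+x. ennreal (norm (f x)) \<partial>bind_pmf p (\<lambda>s. pmf_of_set (A s))) < \<infinity>"
    using nn_integral_bind_pmf_of_set[of "\<lambda>x. \<bar>f x\<bar>"] by simp
qed simp

(* If f is not integrable, both sides are the junk value 0: the deviation bound makes the two
  integrability conditions equivalent. *)
lemma expectation_bind_pmf_of_set_bounded_deviation:
  fixes f :: "'b \<Rightarrow> real"
  assumes dev: "\<And>s x. s \<in> set_pmf p \<Longrightarrow> x \<in> A s \<Longrightarrow> \<bar>f x - avg (A s) f\<bar> \<le> K"
  shows "measure_pmf.expectation (bind_pmf p (\<lambda>s. pmf_of_set (A s))) f =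
         measure_pmf.expectation p (\<lambda>s. avg (A s) f)"
  using expectation_bind_pmf_of_set integrable_avg_bind_pmf_of_set
    integrable_bind_pmf_of_set[OF _ dev] not_integrable_integral_eq
  by metis

end

context
  fixes p :: "'a set pmf" and d k :: nat and g :: "'a set \<Rightarrow> real" and c :: real
  assumes p: "\<And>s. s \<in> set_pmf p \<Longrightarrow> finite s \<and> card s = d"
    and k: "1 \<le> k" "k \<le> d"
    and g: "\<And>s. s \<in> set_pmf p \<Longrightarrow> swap_bounded g s k c" and c: "c > 0"
begin

lemma expectation_bind_k_subsets:
  "measure_pmf.expectation (bind_pmf p (\<lambda>s. pmf_of_set (k_subsets s k))) g =
   measure_pmf.expectation p (\<lambda>s. avg (k_subsets s k) g)"
proof (rule expectation_bind_pmf_of_set_bounded_deviation)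
  fix s T assume s: "s \<in> set_pmf p" and T: "T \<in> k_subsets s k"
  show "\<bar>g T - avg (k_subsets s k) g\<bar> \<le> ln (real (d choose k)) + real k * c\<^sup>2 / 8"
    using k_subsets_deviation_le[OF _ _ g[OF s] _ T] p[OF s] k c by (simp add: card_k_subsets)
qed (use p k in \<open>auto simp: k_subsets_nonempty\<close>)

lemma prob_bind_k_subsets_deviation_gt_le:
  assumes a: "a > 0"
  shows "measure_pmf.prob (bind_pmf p (\<lambda>s. pmf_of_set (k_subsets s k)))
           {T. g T - measure_pmf.expectation (bind_pmf p (\<lambda>s. pmf_of_set (k_subsets s k))) g > a}
         \<le> measure_pmf.prob p {s. avg (k_subsets s k) g
                - measure_pmf.expectation p (\<lambda>s. avg (k_subsets s k) g) > a / 2}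
           + exp (- (a\<^sup>2 / (2 * real k * c\<^sup>2)))"
proof -
  have "measure_pmf.prob (pmf_of_set (k_subsets s k)) {T. g T - avg (k_subsets s k) g > a / 2}
          \<le> exp (- (a\<^sup>2 / (2 * real k * c\<^sup>2)))" if s: "s \<in> set_pmf p" for s
    using prob_k_subsets_deviation_gt_le[OF _ k(1) _ g[OF s] c, of "a / 2"] p[OF s] k(2) a
    by (simp add: power_divide mult.assoc)
  from prob_bind_pmf_gt_le[OF this, where a = "a / 2"
      and e = "measure_pmf.expectation p (\<lambda>s. avg (k_subsets s k) g)"]
  show ?thesis by (simp add: expectation_bind_k_subsets)
qed

end

lemma prob_bind_k_subsets_deviation_lt_le:
  fixes p :: "'a set pmf" and g :: "'a set \<Rightarrow> real"
  assumes p: "\<And>s. s \<in> set_pmf p \<Longrightarrow> finite s \<and> card s = d" and k: "1 \<le> k" "k \<le> d"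
    and g: "\<And>s. s \<in> set_pmf p \<Longrightarrow> swap_bounded g s k c" and c: "c > 0" and a: "a > 0"
  shows "measure_pmf.prob (bind_pmf p (\<lambda>s. pmf_of_set (k_subsets s k)))
           {T. g T - measure_pmf.expectation (bind_pmf p (\<lambda>s. pmf_of_set (k_subsets s k))) g < - a}
         \<le> measure_pmf.prob p {s. avg (k_subsets s k) g
                - measure_pmf.expectation p (\<lambda>s. avg (k_subsets s k) g) < - (a / 2)}
           + exp (- (a\<^sup>2 / (2 * real k * c\<^sup>2)))"
  using prob_bind_k_subsets_deviation_gt_le[of p d k "\<lambda>T. - g T" c a] assms
  by (simp add: avg_uminus algebra_simps)

section \<open>Faces, links and the down-up walk\<close>

lemma face_pmf_eq_bind: "face_pmf pd j = bind_pmf pd (\<lambda>s. pmf_of_set (k_subsets s j))"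
  by (simp add: face_pmf_def k_subsets_def)

context
  fixes pd :: "'v set pmf" and d :: nat
  assumes unif: "d_uniform pd d"
begin

lemma finite_card_top_face: "s \<in> set_pmf pd \<Longrightarrow> finite s \<and> card s = d"
  using unif by (auto simp: d_uniform_def)

lemma set_face_pmf: "j \<le> d \<Longrightarrow> set_pmf (face_pmf pd j) = (\<Union>s\<in>set_pmf pd. k_subsets s j)"
  using finite_card_top_face by (simp add: face_pmf_eq_bind k_subsets_nonempty)

lemma set_face_pmf_top: "set_pmf (face_pmf pd d) = set_pmf pd"
proof -
  have "k_subsets s d = {s}" if "s \<in> set_pmf pd" for s
  proof -
    have "T = s" if "T \<subseteq> s" "card T = d" for T
      using finite_card_top_face[OF \<open>s \<in> set_pmf pd\<close>] that card_subset_eq by metis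
    then have "k_subsets s d \<subseteq> {s}" unfolding k_subsets_def by blast
    then show ?thesis using finite_card_top_face[OF that] by auto
  qed
  then show ?thesis by (simp add: set_face_pmf)
qed

lemma link_vertex_pmf_insert:
  assumes x: "x \<in> set_pmf pd" "v \<in> x" and z: "z \<in> set_pmf (link_vertex_pmf pd (x - {v}))"
  shows "insert z (x - {v}) \<in> set_pmf pd"
proof -
  have x_fin: "finite x" "card x = d" using finite_card_top_face[OF x(1)] by auto
  have d: "Suc (card (x - {v})) = d" using x_fin x(2) card_gt_0_iff[of x] by auto
  have "set_pmf (face_pmf pd d) \<inter> {t. x - {v} \<subseteq> t} \<noteq> {}"
    using x by (auto simp: set_face_pmf_top)
  then obtain t where t: "t \<in> set_pmf pd" "x - {v} \<subseteq> t" "z = the_elem (t - (x - {v}))"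
    using z d by (auto simp: link_vertex_pmf_def set_cond_pmf set_face_pmf_top)
  have "card (t - (x - {v})) = card t - card (x - {v})"
    using t x_fin by (intro card_Diff_subset) auto
  then have "card (t - (x - {v})) = 1"
    using d finite_card_top_face[OF t(1)] by simp
  then obtain u where "t - (x - {v}) = {u}" by (rule card_1_singletonE)
  then have "t = insert u (x - {v})" "z = u" using t(2,3) by auto
  then show ?thesis using t(1) by simp
qed

context
  fixes k :: nat and \<nu> :: real and f :: "'v set \<Rightarrow> real"
  assumes bd: "bounded_difference pd k \<nu> f" and k: "1 \<le> k" "k \<le> d"
begin

lemma bounded_difference_exchange:
  assumes T: "T \<in> set_pmf (face_pmf pd k)" "v \<in> T"
    and U: "U \<in> set_pmf (face_pmf pd k)" "T - {v} \<subseteq> U"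
  shows "\<bar>f T - f U\<bar> \<le> sqrt (\<nu> / real k)"
proof -
  obtain s where "s \<in> set_pmf pd" "T \<subseteq> s" using T k by (auto simp: set_face_pmf)
  then have "finite T" using finite_card_top_face finite_subset by blast
  moreover have "U \<in> set_pmf (cond_pmf (face_pmf pd k) {t. T - {v} \<subseteq> t})"
    using T U by (subst set_cond_pmf) auto
  moreover have "set_pmf (pmf_of_set T) = T" using \<open>finite T\<close> T(2) by (intro set_pmf_of_set) auto
  ultimately have "U \<in> set_pmf (down_up_step pd k T)"
    using T by (auto simp: down_up_step_def)
  then have "(f T - f U)\<^sup>2 \<le> \<nu> / real k" using bd T by (auto simp: bounded_difference_def)
  then show ?thesis using real_sqrt_le_mono by fastforce
qed

lemma swap_bounded_of_bounded_difference:
  assumes s: "s \<in> set_pmf pd"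
  shows "swap_bounded f s k (sqrt (\<nu> / real k))"
  unfolding swap_bounded_def
proof (intro ballI)
  fix T v w assume T: "T \<in> k_subsets s k" and v: "v \<in> T" and w: "w \<in> s - T"
  have "finite T" using T finite_card_top_face[OF s] finite_subset by auto
  then have "card (insert w (T - {v})) = k" using T v w by (subst card_insert_Diff_singleton) auto
  then have "insert w (T - {v}) \<in> k_subsets s k" using T v w by auto
  then show "\<bar>f T - f (insert w (T - {v}))\<bar> \<le> sqrt (\<nu> / real k)"
    using s T v k by (intro bounded_difference_exchange) (auto simp: set_face_pmf)
qed

lemma avg_k_subsets_link_diff_le:
  assumes nu: "\<nu> \<ge> 0" and x: "x \<in> set_pmf pd" "v \<in> x"
    and z: "z \<in> set_pmf (link_vertex_pmf pd (x - {v}))"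
  shows "\<bar>avg (k_subsets x k) f - avg (k_subsets (insert z (x - {v})) k) f\<bar>
           \<le> real k / real d * sqrt (\<nu> / real k)"
proof -
  have x_fin: "finite x" "card x = d" using finite_card_top_face[OF x(1)] by auto
  have x': "insert z (x - {v}) \<in> set_pmf pd" using link_vertex_pmf_insert x z by blast
  show ?thesis
  proof (cases "z \<in> x")
    case True
    have "z = v"
    proof (rule ccontr)
      assume "z \<noteq> v"
      then have "insert z (x - {v}) = x - {v}" using True by auto
      then show False using finite_card_top_face[OF x'] x_fin x(2) card_Diff1_less[of x v] by simp
    qed
    then show ?thesis using x(2) nu by (simp add: insert_absorb)
  next
    case False
    show ?thesis
      unfolding x_fin(2)[symmetric]
    proof (rule avg_k_subsets_exchange_diff_le[OF x_fin(1) x(2) False k(1)])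
      fix T assume T: "T \<in> k_subsets x k" and "v \<in> T"
      moreover have "finite T" using T x_fin finite_subset by auto
      ultimately have "card (insert z (T - {v})) = k"
        using T False by (subst card_insert_Diff_singleton) auto
      then have "insert z (T - {v}) \<in> k_subsets (insert z (x - {v})) k"
        using T by auto
      with x x' T \<open>v \<in> T\<close> show "\<bar>f T - f (insert z (T - {v}))\<bar> \<le> sqrt (\<nu> / real k)"
        using k by (intro bounded_difference_exchange) (auto simp: set_face_pmf)
    qed (use k x_fin nu in auto)
  qed
qed

lemma lipschitz_cx_avg_k_subsets:
  assumes nu: "\<nu> \<ge> 0"
  shows "lipschitz_cx pd d (real k / real d * \<nu>) (\<lambda>s. avg (k_subsets s k) f)"
  unfolding lipschitz_cx_def set_face_pmf_top
proof (intro ballI allI impI)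
  fix x and z :: "'v \<Rightarrow> 'v"
  assume x: "x \<in> set_pmf pd" and z: "\<forall>v\<in>x. z v \<in> set_pmf (link_vertex_pmf pd (x - {v}))"
  define F where "F s = avg (k_subsets s k) f" for s
  define b where "b = real k / real d * sqrt (\<nu> / real k)"
  have "0 \<le> b" using nu by (simp add: b_def)
  moreover have "\<bar>F x - F (insert (z v) (x - {v}))\<bar> \<le> b" if "v \<in> x" for v
    unfolding F_def b_def using avg_k_subsets_link_diff_le[OF nu x that] z that by blast
  ultimately have "(\<Sum>v\<in>x. (max (F x - F (insert (z v) (x - {v}))) 0)\<^sup>2) \<le> (\<Sum>v\<in>x. b\<^sup>2)"
    by (intro sum_mono power_mono) (auto simp: abs_le_iff)
  also have "\<dots> = real k / real d * \<nu>"
    using finite_card_top_face[OF x] k nu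
    by (simp add: b_def power_mult_distrib power_divide power2_eq_square field_simps)
  finally show "(\<Sum>v\<in>x. (max (F x - F (insert (z v) (x - {v}))) 0)\<^sup>2) \<le> real k / real d * \<nu>" .
qed

lemma prob_face_pmf_deviation_gt_le:
  assumes nu: "\<nu> > 0" and t: "t > 0"
  shows "measure_pmf.prob (face_pmf pd k) {T. f T - measure_pmf.expectation (face_pmf pd k) f > t}
      \<le> measure_pmf.prob pd {s. avg (k_subsets s k) f
             - measure_pmf.expectation pd (\<lambda>s. avg (k_subsets s k) f) > t / 2}
        + exp (- (t\<^sup>2 / (2 * \<nu>)))"
proof -
  have c: "sqrt (\<nu> / real k) > 0"
    and exponent: "t\<^sup>2 / (2 * \<nu>) = t\<^sup>2 / (2 * real k * (sqrt (\<nu> / real k))\<^sup>2)"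
    using nu k by simp_all
  show ?thesis
    unfolding face_pmf_eq_bind exponent
    by (rule prob_bind_k_subsets_deviation_gt_le)
       (use finite_card_top_face k swap_bounded_of_bounded_difference c t in auto)
qed

lemma prob_face_pmf_deviation_lt_le:
  assumes nu: "\<nu> > 0" and t: "t > 0"
  shows "measure_pmf.prob (face_pmf pd k) {T. f T - measure_pmf.expectation (face_pmf pd k) f < - t}
      \<le> measure_pmf.prob pd {s. avg (k_subsets s k) f
             - measure_pmf.expectation pd (\<lambda>s. avg (k_subsets s k) f) < - (t / 2)}
        + exp (- (t\<^sup>2 / (2 * \<nu>)))"
proof -
  have c: "sqrt (\<nu> / real k) > 0"
    and exponent: "t\<^sup>2 / (2 * \<nu>) = t\<^sup>2 / (2 * real k * (sqrt (\<nu> / real k))\<^sup>2)"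
    using nu k by simp_all
  show ?thesis
    unfolding face_pmf_eq_bind exponent
    by (rule prob_bind_k_subsets_deviation_lt_le)
       (use finite_card_top_face k swap_bounded_of_bounded_difference c t in auto)
qed

end

end

theorem mainTheorem11:
  fixes pd :: "'v set pmf" and d k :: nat and up low :: "real \<Rightarrow> real \<Rightarrow> real"
    and \<nu> :: real and f' :: "'v set \<Rightarrow> real"
  assumes unif: "d_uniform pd d"
    and k: "1 \<le> k" "k \<le> d"
    and up: "\<And>\<mu> f t. \<mu> > 0 \<Longrightarrow> lipschitz_cx pd d \<mu> f \<Longrightarrow> t > 0 \<Longrightarrow>
        measure_pmf.prob pd {x. f x - measure_pmf.expectation pd f > t} \<le> up t \<mu>"
    and low: "\<And>\<mu> f t. \<mu> > 0 \<Longrightarrow> lipschitz_cx pd d \<mu> f \<Longrightarrow> t > 0 \<Longrightarrow>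
        measure_pmf.prob pd {x. f x - measure_pmf.expectation pd f < - t} \<le> low t \<mu>"
    and nu: "\<nu> > 0"
    and bd: "bounded_difference pd k \<nu> f'"
  shows "\<forall>t > 0.
      measure_pmf.prob (face_pmf pd k)
        {x. f' x - measure_pmf.expectation (face_pmf pd k) f' > t}
        \<le> up (t / 2) (real k / real d * \<nu>) + exp (- (t\<^sup>2 / (4 * \<nu>)))
    \<and> measure_pmf.prob (face_pmf pd k)
        {x. f' x - measure_pmf.expectation (face_pmf pd k) f' < - t}
        \<le> low (t / 2) (real k / real d * \<nu>) + exp (- (t\<^sup>2 / (4 * \<nu>)))"
proof (intro allI impI)
  fix t :: real assume t: "t > 0"
  have lip: "lipschitz_cx pd d (real k / real d * \<nu>) (\<lambda>s. avg (k_subsets s k) f')"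
    using lipschitz_cx_avg_k_subsets[OF unif bd k] nu by simp
  have \<mu>: "real k / real d * \<nu> > 0" and t2: "t / 2 > 0" using k nu t by simp_all
  have "exp (- (t\<^sup>2 / (2 * \<nu>))) \<le> exp (- (t\<^sup>2 / (4 * \<nu>)))"
    using nu by (simp add: field_simps)
  then show "measure_pmf.prob (face_pmf pd k)
        {x. f' x - measure_pmf.expectation (face_pmf pd k) f' > t}
        \<le> up (t / 2) (real k / real d * \<nu>) + exp (- (t\<^sup>2 / (4 * \<nu>)))
    \<and> measure_pmf.prob (face_pmf pd k)
        {x. f' x - measure_pmf.expectation (face_pmf pd k) f' < - t}
        \<le> low (t / 2) (real k / real d * \<nu>) + exp (- (t\<^sup>2 / (4 * \<nu>)))"
    using prob_face_pmf_deviation_gt_le[OF unif bd k nu t] up[OF \<mu> lip t2]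
      prob_face_pmf_deviation_lt_le[OF unif bd k nu t] low[OF \<mu> lip t2]
    by (intro conjI) linarith+
qed

end
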